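(* Let $G$ be a non-singular regular graph with $n$ vertices. Then $\operatorname{Aut}\mathcal{A}(G)\subseteq\{g_\pi:\pi\in S_n\}$, where $g_\pi$ denotes a linear map $\mathcal{A}(G)\to\mathcal{A}(G)$ of the form $g_\pi(e_i)=\alpha_i e_{\pi(i)}$ for all $i$, with nonzero scalars $\alpha_i$.
   Context: Graphs are simple (no loops or multiple edges) and connected; here $V=\{1,\dots,n\}$. The adjacency matrix is $A=(a_{ij})$ with $a_{ij}=1$ if $i,j$ are neighbors and $0$ otherwise; $G$ is non-singular if $\det A\neq0$; $G$ is regular if all vertices have the same number of neighbors. An evolution algebra over $\mathbb{R}$ is an algebra with a basis $\{e_i\}$ (natural basis) such that $e_i\cdot e_j=0$ for $i\ne j$ and $e_i\cdot e_i=\sum_k c_{ik}e_k$. $\mathcal{A}(G)$ has natural basis $\{e_1,\dots,e_n\}$ with $e_i\cdot e_i=\sum_{k}a_{ik}e_k$ and $e_i\cdot e_j=0$ for $i\ne j$. $\operatorname{Aut}\mathcal{A}(G)$ is the group of bijective linear maps $g$ with $g(u\cdot v)=g(u)\cdot g(v)$. *)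

theory Defs
  imports "HOL-Analysis.Analysis"
begin

definition simple_connected_graph :: "('n::finite \<Rightarrow> 'n \<Rightarrow> bool) \<Rightarrow> bool" where
  "simple_connected_graph E \<longleftrightarrow>
     (\<forall>i j. E i j \<longrightarrow> E j i) \<and> (\<forall>i. \<not> E i i) \<and> (\<forall>i j. E\<^sup>*\<^sup>* i j)"

definition adj_matrix :: "('n::finite \<Rightarrow> 'n \<Rightarrow> bool) \<Rightarrow> real^'n^'n" where
  "adj_matrix E = (\<chi> i j. if E i j then 1 else 0)"

definition nonsingular_graph :: "('n::finite \<Rightarrow> 'n \<Rightarrow> bool) \<Rightarrow> bool" where
  "nonsingular_graph E \<longleftrightarrow> det (adj_matrix E) \<noteq> 0"

definition regular_graph :: "('n::finite \<Rightarrow> 'n \<Rightarrow> bool) \<Rightarrow> bool" where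
  "regular_graph E \<longleftrightarrow> (\<exists>d. \<forall>i. card {j. E i j} = d)"

definition nat_basis :: "'n::finite \<Rightarrow> real^'n" where
  "nat_basis i = axis i 1"

text \<open>Product of the evolution algebra A(G): e_i e_j = 0 for i \<noteq> j, e_i e_i = sum_k a_ik e_k,
  extended bilinearly: (u v)_k = sum_i u_i v_i a_ik.\<close>
definition evo_mult :: "('n::finite \<Rightarrow> 'n \<Rightarrow> bool) \<Rightarrow> real^'n \<Rightarrow> real^'n \<Rightarrow> real^'n" where
  "evo_mult E u v = (\<chi> k. \<Sum>i\<in>UNIV. u $ i * v $ i * (adj_matrix E) $ i $ k)"

definition evo_aut :: "('n::finite \<Rightarrow> 'n \<Rightarrow> bool) \<Rightarrow> (real^'n \<Rightarrow> real^'n) \<Rightarrow> bool" where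
  "evo_aut E g \<longleftrightarrow> linear g \<and> bij g \<and> (\<forall>u v. g (evo_mult E u v) = evo_mult E (g u) (g v))"

end

theory Submission
  imports Defs "HOL-Combinatorics.Permutations"
begin

text \<open>Distinct natural basis vectors multiply to zero, so an automorphism sends them to vectors
  whose product vanishes. Since the product is the coordinatewise product followed by the invertible
  adjacency matrix, this forces the images to have pairwise disjoint supports. Being nonzero,
  n vectors in \<open>\<real>\<^sup>n\<close> with disjoint supports are nonzero multiples of distinct basis vectors.\<close>

lemma axis_eq_scaleR_nat_basis: "axis k a = a *\<^sub>R nat_basis k"
  by (simp add: nat_basis_def vec_eq_iff axis_def)

lemma evo_mult_eq_vector_matrix_mult:
  "evo_mult E u v = (\<chi> i. u $ i * v $ i) v* adj_matrix E"
  by (simp add: vector_matrix_mult_def evo_mult_def)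

lemma evo_mult_eq_0_iff:
  fixes E :: "'n::finite \<Rightarrow> 'n \<Rightarrow> bool"
  assumes "nonsingular_graph E"
  shows "evo_mult E u v = 0 \<longleftrightarrow> (\<forall>k. u $ k * v $ k = 0)"
proof -
  have "invertible (transpose (adj_matrix E))"
    using assms by (simp add: invertible_det_nz nonsingular_graph_def det_transpose)
  hence "w v* adj_matrix E = 0 \<longleftrightarrow> w = 0" for w :: "real^'n"
    using matrix_left_invertible_ker[of "transpose (adj_matrix E)"]
    by (auto simp: invertible_def)
  hence "evo_mult E u v = 0 \<longleftrightarrow> (\<chi> k. u $ k * v $ k) = 0"
    by (simp add: evo_mult_eq_vector_matrix_mult)
  thus ?thesis
    by (simp add: vec_eq_iff)
qed

lemma evo_mult_nat_basis_distinct: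
  "i \<noteq> j \<Longrightarrow> evo_mult E (nat_basis i) (nat_basis j) = 0"
  by (auto simp: evo_mult_def nat_basis_def vec_eq_iff axis_def intro!: sum.neutral)

lemma disjoint_supports_imp_scaled_permuted_axis:
  fixes c :: "'n::finite \<Rightarrow> 'a::real_vector^'n"
  assumes nonzero: "\<And>i. c i \<noteq> 0"
    and disjoint: "\<And>i j k. i \<noteq> j \<Longrightarrow> c i $ k = 0 \<or> c j $ k = 0"
  obtains \<pi> where "\<pi> permutes UNIV" "\<And>i. c i $ \<pi> i \<noteq> 0" "\<And>i. c i = axis (\<pi> i) (c i $ \<pi> i)"
proof -
  have "\<forall>i. \<exists>k. c i $ k \<noteq> 0"
    using nonzero by (simp add: vec_eq_iff)
  then obtain \<pi> where \<pi>: "\<And>i. c i $ \<pi> i \<noteq> 0"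
    by metis
  have "inj \<pi>"
    using disjoint \<pi> by (metis injI)
  hence "bij \<pi>"
    by (simp add: bij_def finite_UNIV_inj_surj)
  have "c i $ k = 0" if "k \<noteq> \<pi> i" for i k
  proof -
    obtain j where "k = \<pi> j"
      using \<open>bij \<pi>\<close> by (metis bij_pointE)
    with that disjoint[of i j k] \<pi>[of j] show ?thesis by auto
  qed
  hence "c i = axis (\<pi> i) (c i $ \<pi> i)" for i
    by (auto simp: vec_eq_iff axis_def)
  moreover have "\<pi> permutes UNIV"
    using \<open>bij \<pi>\<close> by (rule bij_imp_permutes) simp
  ultimately show thesis using that \<pi> by blast
qed

theorem proposition3p2:
  fixes E :: "'n::finite \<Rightarrow> 'n \<Rightarrow> bool"
    and g :: "real^'n \<Rightarrow> real^'n"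
  assumes "simple_connected_graph E"
    and "nonsingular_graph E"
    and "regular_graph E"
    and "evo_aut E g"
  shows "\<exists>\<pi> \<alpha>. \<pi> permutes (UNIV :: 'n set) \<and> (\<forall>i. \<alpha> i \<noteq> (0::real)) \<and>
           (\<forall>i. g (nat_basis i) = \<alpha> i *\<^sub>R nat_basis (\<pi> i))"
proof -
  have lin: "linear g" and "inj g" and hom: "\<And>u v. g (evo_mult E u v) = evo_mult E (g u) (g v)"
    using assms(4) by (auto simp: evo_aut_def bij_def)
  have nonzero: "g (nat_basis i) \<noteq> 0" for i
    using \<open>inj g\<close> linear_0[OF lin] by (metis injD nat_basis_def axis_eq_0_iff zero_neq_one)
  have disjoint: "g (nat_basis i) $ k = 0 \<or> g (nat_basis j) $ k = 0" if "i \<noteq> j" for i j k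
    using hom[of "nat_basis i" "nat_basis j"] evo_mult_nat_basis_distinct[OF that]
      evo_mult_eq_0_iff[OF assms(2)] linear_0[OF lin] by auto
  obtain \<pi> where "\<pi> permutes UNIV" and "\<And>i. g (nat_basis i) $ \<pi> i \<noteq> 0"
      and image: "\<And>i. g (nat_basis i) = axis (\<pi> i) (g (nat_basis i) $ \<pi> i)"
    using disjoint_supports_imp_scaled_permuted_axis[of "\<lambda>i. g (nat_basis i)"] nonzero disjoint
    by blast
  moreover have "g (nat_basis i) = (g (nat_basis i) $ \<pi> i) *\<^sub>R nat_basis (\<pi> i)" for i
    using image[of i] by (simp add: axis_eq_scaleR_nat_basis)
  ultimately show ?thesis
    by (intro exI[of _ \<pi>] exI[of _ "\<lambda>i. g (nat_basis i) $ \<pi> i"]) blast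
qed

end
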